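(* Under any parsimonious protocol $\Pi$, for each state of nature $\theta$ it is a best response for the sender never to stop at any transient memory state, i.e., to keep sending signals until the memory state reaches one of the two absorbing states, where the game ends and the receiver acts.
   Context: Setting. The state of nature is $\theta\in\Theta=\{H,L\}$ with prior $\Pr(\theta=H)=p\in(0,1)$. A sender privately observes $\theta$; a receiver does not. $S$ is a finite signal set; conditional on $\theta$, signals are i.i.d. with distribution $\pi_\theta$ on $S$, where $\pi_\theta(s)>0$ for all $s\in S,\theta\in\Theta$, and $\pi_H\neq\pi_L$. The receiver has a finite set of memory states $M$ and chooses a protocol $\Pi=(f,g,a)$: a transition function $f:M\times S\to\Delta(M)$ ($f(i,s)(j)$ is the probability of moving from memory state $i$ to $j$ after signal $s$), an initial distribution $g\in\Delta(M)$ of $m_0$, and an action rule $a:M\to[0,1]$ (probability of action $H$ if the game ends in that memory state). A sender strategy is $\sigma:M\times\Theta\to[0,1]$, the probability of stopping in the current memory state given $\theta$. Timing: $m_0\sim g$; in each period $t=0,1,\dots$, with current memory state $m_t$, the game ends if $m_t$ is absorbing ($f(m_t,s)(m_t)=1$ for all $s$); otherwise the sender stops with probability $\sigma(m_t,\theta)$, ending the game; if not stopped, a signal $s_t\sim\pi_\theta$ is generated and $m_{t+1}\sim f(m_t,s_t)$. When the game ends in state $m_t$ the receiver takes action $H$ with probability $a(m_t)$ and $L$ otherwise. The sender's payoff is $1$ if the action is $H$ and $0$ otherwise; there is no discounting; if the game never ends she gets $0$. Since $\pi_\theta$ has full support, which transitions have positive probability does not depend on $\theta$; absorbing/transient refer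 to the Markov chain on $M$ induced by $f$ with signals from $\pi_\theta$. A protocol is parsimonious if (i) it has exactly two absorbing memory states, one in which $a=0$ and one in which $a=1$, and (ii) all other memory states are transient with $a=0$. *)

theory Defs
  imports "HOL-Analysis.Analysis"
begin

datatype nature = H | L

text \<open>Protocol components: f i s j = probability of moving from memory state i to j after
signal s; g = initial distribution; a m = probability of action H when the game ends in m.
Signal distributions: sg th s. Sender strategy: strat m th = stopping probability.\<close>

definition absorbing :: "('m \<Rightarrow> 's \<Rightarrow> 'm \<Rightarrow> real) \<Rightarrow> 'm \<Rightarrow> bool" where
  "absorbing f m \<longleftrightarrow> (\<forall>s. f m s m = 1)"

definition trans_prob :: "(nature \<Rightarrow> 's::finite \<Rightarrow> real) \<Rightarrow> ('m \<Rightarrow> 's \<Rightarrow> 'm \<Rightarrow> real)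
    \<Rightarrow> nature \<Rightarrow> 'm \<Rightarrow> 'm \<Rightarrow> real" where
  "trans_prob sg f th i j = (\<Sum>s\<in>UNIV. sg th s * f i s j)"

text \<open>Taboo probabilities: first_visit n j = Pr(X_(n+1) = j and X_k \<noteq> i for 0<k<n+1 | X_0 = i).\<close>
fun first_visit :: "(nature \<Rightarrow> 's::finite \<Rightarrow> real) \<Rightarrow> ('m::finite \<Rightarrow> 's \<Rightarrow> 'm \<Rightarrow> real)
    \<Rightarrow> nature \<Rightarrow> 'm \<Rightarrow> nat \<Rightarrow> 'm \<Rightarrow> real" where
  "first_visit sg f th i 0 j = trans_prob sg f th i j"
| "first_visit sg f th i (Suc n) j =
     (\<Sum>k\<in>UNIV. (if k = i then 0 else first_visit sg f th i n k * trans_prob sg f th k j))"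

definition return_prob :: "(nature \<Rightarrow> 's::finite \<Rightarrow> real) \<Rightarrow> ('m::finite \<Rightarrow> 's \<Rightarrow> 'm \<Rightarrow> real)
    \<Rightarrow> nature \<Rightarrow> 'm \<Rightarrow> real" where
  "return_prob sg f th i = (\<Sum>n. first_visit sg f th i n i)"

definition transient :: "(nature \<Rightarrow> 's::finite \<Rightarrow> real) \<Rightarrow> ('m::finite \<Rightarrow> 's \<Rightarrow> 'm \<Rightarrow> real)
    \<Rightarrow> nature \<Rightarrow> 'm \<Rightarrow> bool" where
  "transient sg f th i \<longleftrightarrow> return_prob sg f th i < 1"

text \<open>Parsimonious protocol (transience required under the chain for each state of nature;
by full support of sg this does not depend on the state of nature).\<close>
definition parsimonious :: "(nature \<Rightarrow> 's::finite \<Rightarrow> real) \<Rightarrow> ('m::finite \<Rightarrow> 's \<Rightarrow> 'm \<Rightarrow> real)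
    \<Rightarrow> ('m \<Rightarrow> real) \<Rightarrow> bool" where
  "parsimonious sg f a \<longleftrightarrow>
     (\<exists>h l. h \<noteq> l \<and> absorbing f h \<and> absorbing f l \<and> a h = 1 \<and> a l = 0 \<and>
        (\<forall>m. absorbing f m \<longrightarrow> m = h \<or> m = l) \<and>
        (\<forall>m. m \<noteq> h \<and> m \<noteq> l \<longrightarrow> (\<forall>th. transient sg f th m) \<and> a m = 0))"

text \<open>alive t m = probability that the game has not ended before period t and m_t = m.\<close>
fun alive :: "(nature \<Rightarrow> 's::finite \<Rightarrow> real) \<Rightarrow> ('m::finite \<Rightarrow> 's \<Rightarrow> 'm \<Rightarrow> real)
    \<Rightarrow> ('m \<Rightarrow> real) \<Rightarrow> ('m \<Rightarrow> nature \<Rightarrow> real) \<Rightarrow> nature \<Rightarrow> nat \<Rightarrow> 'm \<Rightarrow> real" where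
  "alive sg f g strat th 0 m = g m"
| "alive sg f g strat th (Suc t) j =
     (\<Sum>i\<in>UNIV. alive sg f g strat th t i * (if absorbing f i then 0 else 1 - strat i th)
                 * trans_prob sg f th i j)"

definition end_prob :: "('m \<Rightarrow> 's \<Rightarrow> 'm \<Rightarrow> real) \<Rightarrow> ('m \<Rightarrow> nature \<Rightarrow> real)
    \<Rightarrow> nature \<Rightarrow> 'm \<Rightarrow> real" where
  "end_prob f strat th m = (if absorbing f m then 1 else strat m th)"

text \<open>Sender's expected payoff = probability that the game ends and action H is taken.\<close>
definition sender_payoff :: "(nature \<Rightarrow> 's::finite \<Rightarrow> real) \<Rightarrow> ('m::finite \<Rightarrow> 's \<Rightarrow> 'm \<Rightarrow> real)
    \<Rightarrow> ('m \<Rightarrow> real) \<Rightarrow> ('m \<Rightarrow> real) \<Rightarrow> ('m \<Rightarrow> nature \<Rightarrow> real) \<Rightarrow> nature \<Rightarrow> real" where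
  "sender_payoff sg f g a strat th =
     (\<Sum>t. \<Sum>m\<in>UNIV. alive sg f g strat th t m * end_prob f strat th m * a m)"

definition is_strategy :: "('m \<Rightarrow> nature \<Rightarrow> real) \<Rightarrow> bool" where
  "is_strategy strat \<longleftrightarrow> (\<forall>m th. 0 \<le> strat m th \<and> strat m th \<le> 1)"

end

theory Submission
  imports Defs
begin

text \<open>Under a parsimonious protocol action \<open>H\<close> can only be taken in an absorbing state, and
there the game ends with certainty whatever the sender does. Stopping can only remove mass from
the surviving paths: by induction on \<open>t\<close>, the probability \<open>alive t m\<close> is antitone in the
stopping probabilities at non-absorbing states. Hence never stopping maximises, period by
period, the mass ending in each absorbing state, and the payoff series can be compared
termwise; they converge because the ending mass telescopes to at most the initial mass.\<close>

lemma trans_prob_nonneg: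
  assumes "\<And>s. 0 \<le> sg th s" and "\<And>i s j. 0 \<le> f i s j"
  shows "0 \<le> trans_prob sg f th i j"
  unfolding trans_prob_def using assms by (simp add: sum_nonneg)

lemma sum_trans_prob:
  assumes "(\<Sum>s\<in>UNIV. sg th s) = 1" and "\<And>i s. (\<Sum>j\<in>UNIV. f i s j) = 1"
  shows "(\<Sum>j\<in>UNIV. trans_prob sg f th i j) = 1"
proof -
  have "(\<Sum>j\<in>UNIV. trans_prob sg f th i j) = (\<Sum>s\<in>UNIV. sg th s * (\<Sum>j\<in>UNIV. f i s j))"
    unfolding trans_prob_def by (subst sum.swap) (simp add: sum_distrib_left)
  also have "\<dots> = 1" using assms by simp
  finally show ?thesis .
qed

lemma parsimonious_action_eq_0:
  assumes "parsimonious sg f a" and "\<not> absorbing f m"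
  shows "a m = 0"
  using assms unfolding parsimonious_def by metis

context
  fixes sg :: "nature \<Rightarrow> 's::finite \<Rightarrow> real"
    and f :: "'m::finite \<Rightarrow> 's \<Rightarrow> 'm \<Rightarrow> real"
    and g :: "'m \<Rightarrow> real"
    and th :: nature
  assumes trans_nonneg: "\<And>i j. 0 \<le> trans_prob sg f th i j"
    and trans_sum: "\<And>i. (\<Sum>j\<in>UNIV. trans_prob sg f th i j) = 1"
    and g_nonneg: "\<And>m. 0 \<le> g m"
begin

lemma alive_nonneg:
  assumes "is_strategy strat"
  shows "0 \<le> alive sg f g strat th t m"
proof (induction t arbitrary: m)
  case 0
  show ?case using g_nonneg by simp
next
  case (Suc t)
  have "0 \<le> (if absorbing f i then 0 else 1 - strat i th)" for i
    using assms unfolding is_strategy_def by simp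
  then show ?case
    using Suc trans_nonneg by (simp add: sum_nonneg)
qed

lemma alive_antimono_strategy:
  assumes strat: "is_strategy strat"
    and less_stopping: "\<And>m. \<not> absorbing f m \<Longrightarrow> strat' m th \<le> strat m th"
  shows "alive sg f g strat th t m \<le> alive sg f g strat' th t m"
proof (induction t arbitrary: m)
  case 0
  show ?case by simp
next
  case (Suc t)
  let ?cont = "\<lambda>s i. if absorbing f i then 0 else 1 - s i th"
  have "alive sg f g strat th t i * ?cont strat i \<le> alive sg f g strat' th t i * ?cont strat' i"
    for i
  proof (rule mult_mono)
    show "alive sg f g strat th t i \<le> alive sg f g strat' th t i" by (rule Suc)
    show "?cont strat i \<le> ?cont strat' i" using less_stopping by simp
    show "0 \<le> alive sg f g strat' th t i"
      using Suc alive_nonneg[OF strat] order_trans by blast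
    show "0 \<le> ?cont strat i" using strat unfolding is_strategy_def by simp
  qed
  then show ?case
    by (simp add: sum_mono mult_right_mono trans_nonneg)
qed

lemma sum_alive_end_prob:
  "(\<Sum>m\<in>UNIV. alive sg f g strat th t m * end_prob f strat th m)
     = (\<Sum>m\<in>UNIV. alive sg f g strat th t m) - (\<Sum>m\<in>UNIV. alive sg f g strat th (Suc t) m)"
proof -
  have "(\<Sum>m\<in>UNIV. alive sg f g strat th (Suc t) m)
     = (\<Sum>i\<in>UNIV. alive sg f g strat th t i * (if absorbing f i then 0 else 1 - strat i th)
          * (\<Sum>j\<in>UNIV. trans_prob sg f th i j))"
    by (simp only: alive.simps sum_distrib_left) (rule sum.swap)
  also have "\<dots> = (\<Sum>i\<in>UNIV. alive sg f g strat th t i * (1 - end_prob f strat th i))"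
    using trans_sum by (intro sum.cong) (auto simp: end_prob_def)
  finally show ?thesis by (simp add: algebra_simps sum_subtractf)
qed

lemma sum_ending_mass_le_initial:
  assumes "is_strategy strat"
  shows "(\<Sum>t<n. \<Sum>m\<in>UNIV. alive sg f g strat th t m * end_prob f strat th m)
           \<le> (\<Sum>m\<in>UNIV. g m)"
proof -
  have "(\<Sum>t<n. \<Sum>m\<in>UNIV. alive sg f g strat th t m * end_prob f strat th m)
      = (\<Sum>m\<in>UNIV. alive sg f g strat th 0 m) - (\<Sum>m\<in>UNIV. alive sg f g strat th n m)"
    unfolding sum_alive_end_prob by (rule sum_lessThan_telescope')
  also have "\<dots> \<le> (\<Sum>m\<in>UNIV. g m)"
    using alive_nonneg[OF assms] by (simp add: sum_nonneg)
  finally show ?thesis .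
qed

lemma summable_payoff_terms:
  assumes strat: "is_strategy strat" and a_range: "\<And>m. 0 \<le> a m \<and> a m \<le> 1"
  shows "summable (\<lambda>t. \<Sum>m\<in>UNIV. alive sg f g strat th t m * end_prob f strat th m * a m)"
proof (rule summableI_nonneg_bounded)
  have end_nonneg: "0 \<le> end_prob f strat th m" for m
    using strat by (simp add: end_prob_def is_strategy_def)
  show "0 \<le> (\<Sum>m\<in>UNIV. alive sg f g strat th t m * end_prob f strat th m * a m)" for t
    using end_nonneg alive_nonneg[OF strat] a_range by (simp add: sum_nonneg)
  fix n
  have "(\<Sum>t<n. \<Sum>m\<in>UNIV. alive sg f g strat th t m * end_prob f strat th m * a m)
     \<le> (\<Sum>t<n. \<Sum>m\<in>UNIV. alive sg f g strat th t m * end_prob f strat th m)"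
    using end_nonneg alive_nonneg[OF strat] a_range
    by (intro sum_mono) (simp add: mult_left_le)
  also have "\<dots> \<le> (\<Sum>m\<in>UNIV. g m)"
    by (rule sum_ending_mass_le_initial[OF strat])
  finally show "(\<Sum>t<n. \<Sum>m\<in>UNIV. alive sg f g strat th t m * end_prob f strat th m * a m)
                  \<le> (\<Sum>m\<in>UNIV. g m)" .
qed

lemma sender_payoff_antimono_strategy:
  assumes a_range: "\<And>m. 0 \<le> a m \<and> a m \<le> 1"
    and a_absorbing: "\<And>m. \<not> absorbing f m \<Longrightarrow> a m = 0"
    and strat: "is_strategy strat" and strat': "is_strategy strat'"
    and less_stopping: "\<And>m. \<not> absorbing f m \<Longrightarrow> strat' m th \<le> strat m th"
  shows "sender_payoff sg f g a strat th \<le> sender_payoff sg f g a strat' th"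
  unfolding sender_payoff_def
proof (rule suminf_le)
  fix t
  have "alive sg f g strat th t m * end_prob f strat th m * a m
          \<le> alive sg f g strat' th t m * end_prob f strat' th m * a m" for m
    using alive_antimono_strategy[where strat' = strat', OF strat less_stopping] a_range[of m] a_absorbing[of m]
    by (cases "absorbing f m") (simp_all add: end_prob_def mult_right_mono)
  then show "(\<Sum>m\<in>UNIV. alive sg f g strat th t m * end_prob f strat th m * a m)
               \<le> (\<Sum>m\<in>UNIV. alive sg f g strat' th t m * end_prob f strat' th m * a m)"
    by (rule sum_mono)
qed (use summable_payoff_terms strat strat' a_range in blast)+

end

theorem lemma3:
  fixes sg :: "nature \<Rightarrow> 's::finite \<Rightarrow> real"
    and f :: "'m::finite \<Rightarrow> 's \<Rightarrow> 'm \<Rightarrow> real"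
    and g :: "'m \<Rightarrow> real"
    and a :: "'m \<Rightarrow> real"
    and strat0 :: "'m \<Rightarrow> nature \<Rightarrow> real"
  assumes pi_pos: "\<And>th s. sg th s > 0"
    and pi_sum: "\<And>th. (\<Sum>s\<in>UNIV. sg th s) = 1"
    and pi_diff: "sg H \<noteq> sg L"
    and f_nonneg: "\<And>i s j. f i s j \<ge> 0"
    and f_sum: "\<And>i s. (\<Sum>j\<in>UNIV. f i s j) = 1"
    and g_nonneg: "\<And>m. g m \<ge> 0"
    and g_sum: "(\<Sum>m\<in>UNIV. g m) = 1"
    and a_range: "\<And>m. 0 \<le> a m \<and> a m \<le> 1"
    and pars: "parsimonious sg f a"
    and strat0_strat: "is_strategy strat0"
    and strat0_never_stop: "\<And>m th. \<not> absorbing f m \<Longrightarrow> strat0 m th = 0"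
  shows "\<forall>th. \<forall>strat. is_strategy strat \<longrightarrow>
           sender_payoff sg f g a strat th \<le> sender_payoff sg f g a strat0 th"
proof (intro allI impI)
  fix th and strat :: "'m \<Rightarrow> nature \<Rightarrow> real"
  assume strat: "is_strategy strat"
  have "0 \<le> sg th s" for s using pi_pos less_imp_le by blast
  then have trans_nonneg: "0 \<le> trans_prob sg f th i j" for i j
    using f_nonneg by (rule trans_prob_nonneg)
  have trans_sum: "(\<Sum>j\<in>UNIV. trans_prob sg f th i j) = 1" for i
    using pi_sum f_sum by (rule sum_trans_prob)
  have less_stopping: "strat0 m th \<le> strat m th" if "\<not> absorbing f m" for m
    using strat strat0_never_stop[OF that] by (simp add: is_strategy_def)
  show "sender_payoff sg f g a strat th \<le> sender_payoff sg f g a strat0 th"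
    by (rule sender_payoff_antimono_strategy[OF trans_nonneg trans_sum g_nonneg a_range
          parsimonious_action_eq_0[OF pars] strat strat0_strat less_stopping])
qed

end
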